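(* Let $(B_k,\delta_k)_{k\ge1}$ be any sequence with $B_k\ge 1$, $\delta_k\in(0,1)$ and $B_k+\delta_k^{-1}\to\infty$, and write $L_k=\log(\delta_k^{-1})$ and $d_k=d_{B_k;\delta_k}(e^{x})$. Then: \begin{enumerate} \item If $B_k/L_k\to 0$, then $d_k = \dfrac{L_k}{\log(B_k^{-1}L_k)}\,(1+o(1))$. \item If $B_k = 2rL_k$ for a fixed $r>0$, then $d_k = (\mu r+o(1))L_k$, where $\mu=\mu(r)>0$ is the unique positive solution of $G(\mu)=-1-r^{-1}$. \item If $B_k/L_k\to\infty$, then $d_k=\dfrac{z_*B_k}{2}(1+o(1))$, where $z_*\approx 2.2334$ is the unique positive solution of $G(z_* )=-1$. \end{enumerate}
   Context: For real $B\ge1$, $\delta\in(0,1)$ and a function $f:[0,B]\to\mathbb{R}$, $d_{B;\delta}(f)$ denotes the minimum degree of a non-constant real polynomial $p$ satisfying $\sup_{x\in[0,B]}|p(x)-f(x)|<\delta$. Define $G:\mathbb{R}_{\ge0}\to\mathbb{R}$ by $G(x)=\sqrt{x^2+1}+x\log\big(\sqrt{x^2+1}-x\big)$ (natural logarithm); $G(0)=1$, $G$ is strictly decreasing on $(0,\infty)$ and tends to $-\infty$, so the solutions referred to are unique. All $o(1)$ terms are as $k\to\infty$. *)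

theory Defs
  imports Complex_Main "HOL-Computational_Algebra.Polynomial"
begin

definition G :: "real \<Rightarrow> real" where
  "G x = sqrt (x\<^sup>2 + 1) + x * ln (sqrt (x\<^sup>2 + 1) - x)"

definition approx_degree :: "real \<Rightarrow> real \<Rightarrow> (real \<Rightarrow> real) \<Rightarrow> nat" where
  "approx_degree B \<delta> f =
     (LEAST n. \<exists>p :: real poly. degree p = n \<and> 0 < degree p \<and>
        (SUP x\<in>{0..B}. \<bar>poly p x - f x\<bar>) < \<delta>)"

end

theory Submission
  imports Defs "HOL-Real_Asymp.Real_Asymp"
begin

(* Upper bounds: expanding each Taylor term of exp (a t) in Chebyshev polynomials and discarding
   those of degree above n gives, for every theta >= 0, a polynomial of degree n whose error on
   [-1, 1] is at most 2 exp (a cosh theta - (n + 1) theta); the substitution t = x / a - 1 with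
   a = B / 2 moves this to [0, B].
   Lower bounds: a polynomial of degree below k is orthogonal to cos (k theta) on the 2 k nodes
   theta = pi i / k, whereas the same discrete inner product of exp (a cos theta) is at least
   k (a/2)^(k + 2 j) / (j! (k + j)!) for every j, so the error is at least half of this quantity.
   With n + 1 = c a and theta = arsinh c, and with k = c a, j = s a, s (c + s) = 1/4, both bounds
   have exponent a (1 + G c) + o(a); this settles the regimes with B of order at least L.  When
   B = o(L), the choices exp theta = 4 (n + 1) / B and j = 0 give degree L / log (L / B) (1 + o(1)). *)

section \<open>Chebyshev polynomials\<close>

fun cheb :: "nat \<Rightarrow> real poly" where
  "cheb 0 = 1"
| "cheb (Suc 0) = [:0, 1:]"
| "cheb (Suc (Suc n)) = [:0, 2:] * cheb (Suc n) - cheb n"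

lemma poly_cheb_cos: "poly (cheb n) (cos x) = cos (real n * x)"
proof (induction n rule: cheb.induct)
  case (3 n)
  have "cos (real (Suc (Suc n)) * x) = 2 * cos x * cos (real (Suc n) * x) - cos (real n * x)"
  proof -
    have e1: "real (Suc (Suc n)) * x = real (Suc n) * x + x" by (simp add: algebra_simps)
    have e2: "real n * x = real (Suc n) * x - x" by (simp add: algebra_simps)
    show ?thesis unfolding e1 e2 cos_add cos_diff by (simp add: algebra_simps)
  qed
  then show ?case using 3 by simp
qed auto

lemma degree_cheb_le: "degree (cheb n) \<le> n"
proof (induction n rule: cheb.induct)
  case (3 n)
  have "degree ([:0, 2:] * cheb (Suc n)) \<le> Suc (Suc n)"
    using degree_mult_le[of "[:0,2:]" "cheb (Suc n)"] 3 by simp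
  moreover have "degree (cheb n) \<le> Suc (Suc n)" using 3 by simp
  ultimately show ?case by (simp add: degree_diff_le)
qed auto

lemma abs_poly_cheb_le_1: "\<bar>t\<bar> \<le> 1 \<Longrightarrow> \<bar>poly (cheb n) t\<bar> \<le> 1"
  by (metis poly_cheb_cos abs_cos_le_one cos_arccos_abs)

lemma cos_power_eq_binomial_sum:
  "cos x ^ m = (\<Sum>i\<le>m. real (m choose i) * cos ((2 * real i - real m) * x)) / 2 ^ m"
proof -
  have c: "complex_of_real (cos x) = (cis x + cis (-x)) / 2"
    by (simp add: complex_eq_iff)
  have "(cis x + cis (-x)) ^ m = (\<Sum>i\<le>m. of_nat (m choose i) * cis x ^ i * cis (-x) ^ (m - i))"
    by (simp add: binomial_ring)
  also have "\<dots> = (\<Sum>i\<le>m. of_nat (m choose i) * cis ((2 * real i - real m) * x))"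
  proof (rule sum.cong)
    fix i assume "i \<in> {..m}"
    then have "real (m - i) = real m - real i" by simp
    then show "of_nat (m choose i) * cis x ^ i * cis (-x) ^ (m - i) = of_nat (m choose i) * cis ((2 * real i - real m) * x)"
      by (simp add: DeMoivre cis_mult algebra_simps)
  qed simp
  finally have "complex_of_real (cos x ^ m) = (\<Sum>i\<le>m. of_nat (m choose i) * cis ((2 * real i - real m) * x)) / 2 ^ m"
    by (simp add: c power_divide)
  then have "cos x ^ m = Re ((\<Sum>i\<le>m. of_nat (m choose i) * cis ((2 * real i - real m) * x)) / 2 ^ m)"
    by (metis Re_complex_of_real)
  also have "\<dots> = (\<Sum>i\<le>m. real (m choose i) * cos ((2 * real i - real m) * x)) / 2 ^ m"
    by (simp add: Re_sum Re_divide power2_eq_square)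
  finally show ?thesis .
qed

lemma binomial_sum_exp_eq_cosh_power:
  "(\<Sum>i\<le>m. real (m choose i) * exp ((2 * real i - real m) * \<theta>)) = (2 * cosh \<theta>) ^ m"
proof -
  have "2 * cosh \<theta> = exp \<theta> + exp (-\<theta>)" by (simp add: cosh_field_def)
  then have "(2 * cosh \<theta>) ^ m = (exp \<theta> + exp (-\<theta>)) ^ m" by simp
  also have "\<dots> = (\<Sum>i\<le>m. real (m choose i) * exp \<theta> ^ i * exp (-\<theta>) ^ (m - i))"
    by (simp add: binomial_ring)
  also have "\<dots> = (\<Sum>i\<le>m. real (m choose i) * exp ((2 * real i - real m) * \<theta>))"
  proof (rule sum.cong)
    fix i assume "i \<in> {..m}"
    then have "real (m - i) = real m - real i" by simp
    then show "real (m choose i) * exp \<theta> ^ i * exp (-\<theta>) ^ (m - i) = real (m choose i) * exp ((2 * real i - real m) * \<theta>)"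
      by (simp add: exp_of_nat_mult[symmetric] mult.assoc exp_add[symmetric] algebra_simps)
  qed simp
  finally show ?thesis ..
qed

lemma chebyshev_index_eq: "real (nat \<bar>2 * int i - int m\<bar>) = \<bar>2 * real i - real m\<bar>"
  by linarith

lemma power_eq_cheb_sum:
  assumes "\<bar>t\<bar> \<le> 1"
  shows "t ^ m = (\<Sum>i\<le>m. real (m choose i) * poly (cheb (nat \<bar>2 * int i - int m\<bar>)) t) / 2 ^ m"
proof -
  have t: "t = cos (arccos t)" using assms by simp
  have "cos (real (nat \<bar>2 * int i - int m\<bar>) * y) = cos ((2 * real i - real m) * y)" for i y
    unfolding chebyshev_index_eq
    by (cases "2 * real i - real m \<ge> 0") (simp_all add: abs_if, metis cos_minus minus_diff_eq mult_minus_left)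
  then show ?thesis by (subst (1 2) t) (simp add: poly_cheb_cos cos_power_eq_binomial_sum)
qed

lemma exp_le_two_cosh:
  fixes \<theta> y :: real
  assumes "\<theta> \<ge> 0" "real (n + 1) \<le> \<bar>y\<bar>"
  shows "exp (real (n + 1) * \<theta>) \<le> 2 * cosh (y * \<theta>)"
proof -
  have "real (n + 1) * \<theta> \<le> \<bar>y * \<theta>\<bar>"
    using assms by (simp add: abs_mult mult_right_mono)
  then have "exp (real (n + 1) * \<theta>) \<le> exp \<bar>y * \<theta>\<bar>" by simp
  also have "\<dots> \<le> exp (y * \<theta>) + exp (- (y * \<theta>))" by (simp add: abs_if)
  finally show ?thesis by (simp add: cosh_field_def)
qed

section \<open>Chebyshev approximation of the exponential\<close>

lemma abs_exp_minus_taylor_le: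
  fixes x :: real
  shows "\<bar>exp x - (\<Sum>m<M. x ^ m / fact m)\<bar> \<le> exp \<bar>x\<bar> * \<bar>x\<bar> ^ M / fact M"
proof -
  obtain s where s: "\<bar>s\<bar> \<le> \<bar>x\<bar>" "exp x = (\<Sum>m<M. x ^ m / fact m) + exp s / fact M * x ^ M"
    using Maclaurin_exp_le by blast
  have "exp s \<le> exp \<bar>x\<bar>" using s(1) by simp
  then show ?thesis
    using s(2) by (simp add: abs_mult power_abs mult_right_mono divide_right_mono)
qed

lemma taylor_exp_le:
  fixes x :: real
  assumes "x \<ge> 0"
  shows "(\<Sum>m<M. x ^ m / fact m) \<le> exp x"
proof -
  obtain s where "exp x = (\<Sum>m<M. x ^ m / fact m) + exp s / fact M * x ^ M"
    using Maclaurin_exp_le by blast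
  then show ?thesis using assms by (metis exp_ge_zero fact_ge_zero divide_nonneg_nonneg
      le_add_same_cancel1 mult_nonneg_nonneg zero_le_power)
qed

text \<open>Each Taylor term \<open>(a t)^m / m!\<close> of \<open>exp (a t)\<close> is expanded in Chebyshev polynomials
  by \<open>power_eq_cheb_sum\<close>; the polynomials of degree larger than \<open>n\<close> are discarded.\<close>
definition exp_cheb_trunc :: "real \<Rightarrow> nat \<Rightarrow> nat \<Rightarrow> real poly" where
  "exp_cheb_trunc a M n = (\<Sum>m<M. \<Sum>i\<le>m. if nat \<bar>2 * int i - int m\<bar> \<le> n
     then smult ((a/2)^m / fact m * real (m choose i)) (cheb (nat \<bar>2 * int i - int m\<bar>)) else 0)"

lemma degree_exp_cheb_trunc: "degree (exp_cheb_trunc a M n) \<le> n"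
  unfolding exp_cheb_trunc_def
  by (intro degree_sum_le) (auto intro: order.trans[OF degree_cheb_le] order.trans[OF degree_smult_le])

lemma binomial_sum_cosh_eq_cosh_power:
  "(\<Sum>i\<le>m. real (m choose i) * cosh ((2 * real i - real m) * \<theta>)) = (2 * cosh \<theta>) ^ m"
proof -
  have "2 * (\<Sum>i\<le>m. real (m choose i) * cosh ((2 * real i - real m) * \<theta>))
      = (\<Sum>i\<le>m. real (m choose i) * exp ((2 * real i - real m) * \<theta>))
        + (\<Sum>i\<le>m. real (m choose i) * exp ((2 * real i - real m) * - \<theta>))"
    unfolding sum_distrib_left sum.distrib[symmetric]
    by (intro sum.cong refl) (simp add: cosh_field_def algebra_simps)
  also have "\<dots> = 2 * (2 * cosh \<theta>) ^ m"
    using binomial_sum_exp_eq_cosh_power[of m \<theta>] binomial_sum_exp_eq_cosh_power[of m "-\<theta>"] by simp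
  finally show ?thesis by simp
qed

lemma taylor_exp_minus_exp_cheb_trunc:
  assumes t: "\<bar>t\<bar> \<le> 1"
  shows "(\<Sum>m<M. (a * t) ^ m / fact m) - poly (exp_cheb_trunc a M n) t
    = (\<Sum>m<M. \<Sum>i\<le>m. if nat \<bar>2 * int i - int m\<bar> \<le> n then 0
        else (a/2)^m / fact m * real (m choose i) * poly (cheb (nat \<bar>2 * int i - int m\<bar>)) t)"
proof -
  have "(a * t) ^ m / fact m
      = (\<Sum>i\<le>m. (a/2)^m / fact m * real (m choose i) * poly (cheb (nat \<bar>2 * int i - int m\<bar>)) t)" for m
  proof -
    have "(a * t) ^ m / fact m = (a/2)^m / fact m * (t ^ m * 2 ^ m)"
      by (simp add: power_mult_distrib power_divide)
    also have "t ^ m * 2 ^ m = (\<Sum>i\<le>m. real (m choose i) * poly (cheb (nat \<bar>2 * int i - int m\<bar>)) t)"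
      using power_eq_cheb_sum[OF t, of m] by simp
    finally show ?thesis by (simp add: sum_distrib_left mult.assoc)
  qed
  then show ?thesis
    by (simp add: exp_cheb_trunc_def poly_sum sum_subtractf[symmetric]) (intro sum.cong refl, auto)
qed

lemma abs_taylor_exp_minus_cheb_trunc_le:
  fixes a \<theta> t :: real
  assumes a: "a \<ge> 0" and \<theta>: "\<theta> \<ge> 0" and t: "\<bar>t\<bar> \<le> 1"
  shows "\<bar>(\<Sum>m<M. (a * t) ^ m / fact m) - poly (exp_cheb_trunc a M n) t\<bar>
           \<le> 2 * exp (a * cosh \<theta> - real (n + 1) * \<theta>)"
proof -
  define w where "w m i = (a/2)^m / fact m * real (m choose i)" for m i :: nat
  define \<kappa> where "\<kappa> m i = 2 * cosh ((2 * real i - real m) * \<theta>) / exp (real (n + 1) * \<theta>)" for m i :: nat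
  have "\<bar>if nat \<bar>2 * int i - int m\<bar> \<le> n then 0 else w m i * poly (cheb (nat \<bar>2 * int i - int m\<bar>)) t\<bar>
      \<le> w m i * \<kappa> m i" for m i
  proof -
    have w: "w m i \<ge> 0" and \<kappa>: "\<kappa> m i \<ge> 0" using a by (simp_all add: w_def \<kappa>_def)
    show ?thesis
    proof (cases "nat \<bar>2 * int i - int m\<bar> \<le> n")
      case False
      then have "1 \<le> \<kappa> m i"
        using exp_le_two_cosh[OF \<theta>, of n "2 * real i - real m"]
        unfolding \<kappa>_def chebyshev_index_eq[symmetric] by simp
      then have "\<bar>poly (cheb (nat \<bar>2 * int i - int m\<bar>)) t\<bar> \<le> \<kappa> m i"
        using abs_poly_cheb_le_1[OF t] by (rule order.trans[rotated])
      then show ?thesis using False w by (simp add: abs_mult mult_left_mono)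
    qed (use w \<kappa> in simp)
  qed
  then have "\<bar>(\<Sum>m<M. (a * t) ^ m / fact m) - poly (exp_cheb_trunc a M n) t\<bar>
      \<le> (\<Sum>m<M. \<Sum>i\<le>m. w m i * \<kappa> m i)"
    unfolding taylor_exp_minus_exp_cheb_trunc[OF t] w_def[symmetric]
    by (intro order.trans[OF sum_abs] sum_mono order.trans[OF sum_abs])
  also have "\<dots> = 2 / exp (real (n + 1) * \<theta>) * (\<Sum>m<M. (a * cosh \<theta>) ^ m / fact m)"
  proof -
    have "(\<Sum>i\<le>m. w m i * \<kappa> m i) = 2 / exp (real (n + 1) * \<theta>) * ((a * cosh \<theta>) ^ m / fact m)" for m
    proof -
      have "(\<Sum>i\<le>m. w m i * \<kappa> m i) = (a/2)^m / fact m * (2 / exp (real (n + 1) * \<theta>))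
          * (\<Sum>i\<le>m. real (m choose i) * cosh ((2 * real i - real m) * \<theta>))"
        by (simp add: w_def \<kappa>_def sum_distrib_left sum_divide_distrib mult_ac)
      then show ?thesis
        unfolding binomial_sum_cosh_eq_cosh_power by (simp add: power_mult_distrib power_divide field_simps)
    qed
    then show ?thesis by (simp add: sum_distrib_left)
  qed
  also have "\<dots> \<le> 2 / exp (real (n + 1) * \<theta>) * exp (a * cosh \<theta>)"
    using a cosh_real_ge_1[of \<theta>] by (intro mult_left_mono taylor_exp_le) auto
  finally show ?thesis by (simp add: exp_diff)
qed

lemma cheb_approx_exp:
  fixes a \<theta> \<epsilon> :: real
  assumes a: "a \<ge> 0" and \<theta>: "\<theta> \<ge> 0" and \<epsilon>: "\<epsilon> > 0"
  shows "\<exists>q. degree q \<le> n \<and> (\<forall>t. \<bar>t\<bar> \<le> 1 \<longrightarrow>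
           \<bar>exp (a * t) - poly q t\<bar> \<le> 2 * exp (a * cosh \<theta> - real (n + 1) * \<theta>) + \<epsilon>)"
proof -
  have "(\<lambda>M. exp a * (inverse (fact M) * a ^ M)) \<longlonglongrightarrow> exp a * 0"
    by (intro tendsto_mult_left summable_LIMSEQ_zero summable_exp)
  then obtain M where "exp a * (inverse (fact M) * a ^ M) < \<epsilon>"
    using \<epsilon> by (metis (no_types, lifting) eventually_sequentially mult_zero_right order_refl order_tendstoD(2))
  then have M: "exp a * a ^ M / fact M < \<epsilon>" by (simp add: divide_inverse mult_ac)
  have "\<bar>exp (a * t) - poly (exp_cheb_trunc a M n) t\<bar> \<le> 2 * exp (a * cosh \<theta> - real (n + 1) * \<theta>) + \<epsilon>"
    if t: "\<bar>t\<bar> \<le> 1" for t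
  proof -
    have at: "\<bar>a * t\<bar> \<le> a" using a t by (simp add: abs_mult mult_left_le)
    have "\<bar>exp (a * t) - (\<Sum>m<M. (a * t) ^ m / fact m)\<bar> \<le> exp \<bar>a * t\<bar> * \<bar>a * t\<bar> ^ M / fact M"
      by (rule abs_exp_minus_taylor_le)
    also have "\<dots> \<le> exp a * a ^ M / fact M"
      using at by (intro divide_right_mono mult_mono power_mono) auto
    finally show ?thesis
      using abs_taylor_exp_minus_cheb_trunc_le[OF a \<theta> t, of M n] M by linarith
  qed
  then show ?thesis using degree_exp_cheb_trunc by blast
qed

section \<open>A lower bound from discrete orthogonality\<close>

lemma sum_cis_roots_of_unity:
  fixes N :: nat and x :: int
  assumes N: "N > 0"
  shows "(\<Sum>j<N. cis (2 * pi * real j * real_of_int x / real N)) = (if int N dvd x then of_nat N else 0)"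
proof -
  define \<omega> where "\<omega> = cis (2 * pi * real_of_int x / real N)"
  have pw: "cis (2 * pi * real j * real_of_int x / real N) = \<omega> ^ j" for j
    unfolding \<omega>_def DeMoivre by (simp add: algebra_simps)
  show ?thesis
  proof (cases "int N dvd x")
    case True
    then obtain c where c: "x = int N * c" by blast
    have "2 * pi * real_of_int x / real N = 2 * pi * real_of_int c" unfolding c using N by simp
    then have "\<omega> = cis (2 * pi * real_of_int c)" unfolding \<omega>_def by simp
    also have "\<dots> = 1" by (rule cis_multiple_2pi) simp
    finally show ?thesis using True by (simp add: pw)
  next
    case False
    have "\<omega> \<noteq> 1"
    proof
      assume "\<omega> = 1"
      then have "cos (2 * pi * real_of_int x / real N) = 1" unfolding \<omega>_def
        by (metis cis.sel(1) one_complex.sel(1))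
      then obtain n :: int where "2 * pi * real_of_int x / real N = real_of_int n * 2 * pi"
        using cos_one_2pi_int by blast
      then have "real_of_int x = real_of_int n * real N" using N by (simp add: field_simps)
      then have "x = n * int N" by (metis of_int_eq_iff of_int_mult of_int_of_nat_eq)
      then show False using False by simp
    qed
    moreover have "\<omega> ^ N = 1" unfolding \<omega>_def DeMoivre using N by (simp add: cis_multiple_2pi)
    ultimately show ?thesis using False geometric_sum[of \<omega> N] by (simp add: pw)
  qed
qed

lemma sum_cos_roots_of_unity:
  fixes N :: nat and x :: int
  assumes "N > 0"
  shows "(\<Sum>j<N. cos (2 * pi * real j * real_of_int x / real N)) = (if int N dvd x then real N else 0)"
  using arg_cong[OF sum_cis_roots_of_unity[OF assms, of x], of Re] by (simp add: Re_sum)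

definition cos_node_moment :: "nat \<Rightarrow> nat \<Rightarrow> nat \<Rightarrow> real" where
  "cos_node_moment N k m =
     (\<Sum>j<N. cos (2 * pi * real j / real N) ^ m * cos (real k * (2 * pi * real j / real N)))"

lemma cos_node_moment_eq:
  assumes N: "N > 0"
  shows "cos_node_moment N k m = (\<Sum>i\<le>m. real (m choose i) *
     (((if int N dvd (2 * int i - int m - int k) then real N else 0)
      + (if int N dvd (2 * int i - int m + int k) then real N else 0)) / 2)) / 2 ^ m"
proof -
  define e where "e i j s = cos (2 * pi * real j * real_of_int (2 * int i - int m + s * int k) / real N)"
    for i j :: nat and s :: int
  have prod: "cos ((2 * real i - real m) * (2 * pi * real j / real N)) * cos (real k * (2 * pi * real j / real N))
      = (e i j (-1) + e i j 1) / 2" for i j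
    unfolding cos_times_cos e_def by (simp add: algebra_simps add_divide_distrib diff_divide_distrib)
  have roots: "(\<Sum>j<N. e i j s) = (if int N dvd (2 * int i - int m + s * int k) then real N else 0)" for i s
    unfolding e_def by (rule sum_cos_roots_of_unity[OF N])
  have "cos_node_moment N k m = (\<Sum>j<N. (\<Sum>i\<le>m. real (m choose i) * ((e i j (-1) + e i j 1) / 2)) / 2 ^ m)"
    unfolding cos_node_moment_def cos_power_eq_binomial_sum prod[symmetric]
    by (simp add: sum_distrib_right mult.assoc)
  also have "\<dots> = (\<Sum>i\<le>m. real (m choose i) * (((\<Sum>j<N. e i j (-1)) + (\<Sum>j<N. e i j 1)) / 2)) / 2 ^ m"
    unfolding sum_divide_distrib[symmetric]
    by (subst sum.swap) (simp add: sum_distrib_left[symmetric] sum_divide_distrib[symmetric] sum.distrib)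
  finally show ?thesis by (simp add: roots)
qed

lemma cos_node_moment_nonneg: "N > 0 \<Longrightarrow> cos_node_moment N k m \<ge> 0"
  by (subst cos_node_moment_eq) (auto intro!: sum_nonneg divide_nonneg_nonneg)

lemma cos_node_moment_eq_0:
  assumes "m < k"
  shows "cos_node_moment (2 * k) k m = 0"
proof -
  have "\<not> int (2 * k) dvd (2 * int i - int m + s * int k)" if "i \<le> m" "s \<in> {-1, 1}" for i s
  proof
    assume "int (2 * k) dvd (2 * int i - int m + s * int k)"
    then have "int (2 * k) dvd \<bar>2 * int i - int m + s * int k\<bar>" by simp
    then show False using that assms zdvd_not_zless[of "\<bar>2 * int i - int m + s * int k\<bar>" "int (2 * k)"]
      by (auto simp: abs_if split: if_splits)
  qed
  from this[of _ "-1"] this[of _ 1] show ?thesis using assms by (subst cos_node_moment_eq) auto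
qed

lemma cos_node_moment_ge:
  assumes N: "N > 0"
  shows "real ((k + 2 * j) choose (k + j)) * (real N / 2) / 2 ^ (k + 2 * j) \<le> cos_node_moment N k (k + 2 * j)"
proof -
  define m where "m = k + 2 * j"
  define f where "f = (\<lambda>i. real (m choose i) *
     (((if int N dvd (2 * int i - int m - int k) then real N else 0)
      + (if int N dvd (2 * int i - int m + int k) then real N else 0)) / 2))"
  have "real (m choose (k + j)) * (real N / 2) \<le> f (k + j)"
    unfolding f_def m_def by (auto simp: field_simps)
  also have "\<dots> \<le> sum f {..m}"
    by (rule member_le_sum) (auto simp: f_def m_def)
  finally have "real (m choose (k + j)) * (real N / 2) / 2 ^ m \<le> sum f {..m} / 2 ^ m"
    by (rule divide_right_mono) simp
  then show ?thesis
    unfolding m_def f_def using cos_node_moment_eq[OF N, of k "k + 2 * j"] by linarith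
qed

lemma sum_cheb_nodes_poly_eq_0:
  assumes "degree q < k"
  shows "(\<Sum>i<2 * k. poly q (cos (2 * pi * real i / real (2 * k))) * cos (real k * (2 * pi * real i / real (2 * k)))) = 0"
proof -
  have "(\<Sum>i<2 * k. poly q (cos (2 * pi * real i / real (2 * k))) * cos (real k * (2 * pi * real i / real (2 * k))))
      = (\<Sum>m\<le>degree q. coeff q m * cos_node_moment (2 * k) k m)"
    by (simp add: poly_altdef cos_node_moment_def sum_distrib_left sum_distrib_right mult.assoc)
       (rule sum.swap)
  also have "\<dots> = 0" using cos_node_moment_eq_0 assms by simp
  finally show ?thesis .
qed

lemma sum_cheb_nodes_exp_ge:
  fixes a :: real
  assumes a: "a \<ge> 0" and k: "k \<ge> 1"
  shows "real k * ((a/2) ^ (k + 2 * j) / (fact j * fact (k + j)))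
    \<le> (\<Sum>i<2 * k. exp (a * cos (2 * pi * real i / real (2 * k))) * cos (real k * (2 * pi * real i / real (2 * k))))"
proof -
  define N where "N = 2 * k"
  have N: "N > 0" using k by (simp add: N_def)
  define x where "x i = cos (2 * pi * real i / real N)" for i
  define w where "w i = cos (real k * (2 * pi * real i / real N))" for i
  define \<mu> where "\<mu> m = a ^ m / fact m * cos_node_moment N k m" for m
  have "\<mu> sums (\<Sum>i<N. exp (a * x i) * w i)"
  proof -
    have "(\<lambda>m. (a * x i) ^ m / fact m * w i) sums (exp (a * x i) * w i)" for i
      using sums_mult2[OF exp_converges[of "a * x i"], of "w i"] by (simp add: divide_inverse_commute)
    then have "(\<lambda>m. \<Sum>i<N. (a * x i) ^ m / fact m * w i) sums (\<Sum>i<N. exp (a * x i) * w i)"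
      by (rule sums_sum)
    moreover have "(\<Sum>i<N. (a * x i) ^ m / fact m * w i) = \<mu> m" for m
      by (simp add: \<mu>_def cos_node_moment_def x_def w_def sum_distrib_left power_mult_distrib field_simps)
    ultimately show ?thesis by simp
  qed
  then have "\<mu> (k + 2 * j) \<le> (\<Sum>i<N. exp (a * x i) * w i)"
    using sum_le_suminf[of \<mu> "{k + 2 * j}"] a cos_node_moment_nonneg[OF N] by (auto simp: \<mu>_def sums_iff)
  moreover have "real k * ((a/2) ^ (k + 2 * j) / (fact j * fact (k + j))) \<le> \<mu> (k + 2 * j)"
  proof -
    have "real ((k + 2 * j) choose (k + j)) = fact (k + 2 * j) / (fact (k + j) * fact j)"
      by (subst binomial_fact) auto
    then have "real k * ((a/2) ^ (k + 2 * j) / (fact j * fact (k + j)))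
        = a ^ (k + 2 * j) / fact (k + 2 * j) * (real ((k + 2 * j) choose (k + j)) * (real N / 2) / 2 ^ (k + 2 * j))"
      by (simp add: N_def power_divide field_simps)
    also have "\<dots> \<le> \<mu> (k + 2 * j)"
      unfolding \<mu>_def using a by (intro mult_left_mono cos_node_moment_ge N) auto
    finally show ?thesis .
  qed
  ultimately show ?thesis by (simp add: N_def x_def w_def)
qed

text \<open>A polynomial of degree below \<open>k\<close> is invisible to \<open>cos (k \<theta>)\<close> on the \<open>2 k\<close> nodes,
  whereas \<open>exp (a cos \<theta>)\<close> is not; so it cannot be uniformly close to \<open>exp (a t)\<close>.\<close>
lemma exp_minus_poly_lower_bound:
  fixes a :: real and q :: "real poly"
  assumes a: "a \<ge> 0" and k: "k \<ge> 1" and dq: "degree q < k"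
  shows "\<exists>t. \<bar>t\<bar> \<le> 1 \<and> (a/2) ^ (k + 2 * j) / (fact j * fact (k + j)) / 2 \<le> \<bar>exp (a * t) - poly q t\<bar>"
proof (rule ccontr)
  assume small: "\<not> ?thesis"
  define T where "T = (a/2) ^ (k + 2 * j) / (fact j * fact (k + j))"
  define x where "x i = cos (2 * pi * real i / real (2 * k))" for i
  define w where "w i = cos (real k * (2 * pi * real i / real (2 * k)))" for i
  have "real k * T \<le> (\<Sum>i<2 * k. exp (a * x i) * w i)"
    unfolding T_def x_def w_def by (rule sum_cheb_nodes_exp_ge[OF a k])
  also have "\<dots> = (\<Sum>i<2 * k. (exp (a * x i) - poly q (x i)) * w i)"
    using sum_cheb_nodes_poly_eq_0[OF dq]
    by (simp add: x_def w_def left_diff_distrib sum_subtractf)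
  also have "\<dots> \<le> (\<Sum>i<2 * k. \<bar>exp (a * x i) - poly q (x i)\<bar>)"
  proof (rule sum_mono)
    fix i
    have "(exp (a * x i) - poly q (x i)) * w i \<le> \<bar>exp (a * x i) - poly q (x i)\<bar> * \<bar>w i\<bar>"
      by (metis abs_ge_self abs_mult)
    also have "\<dots> \<le> \<bar>exp (a * x i) - poly q (x i)\<bar>" by (simp add: w_def mult_left_le)
    finally show "(exp (a * x i) - poly q (x i)) * w i \<le> \<bar>exp (a * x i) - poly q (x i)\<bar>" .
  qed
  also have "\<dots> < (\<Sum>i<2 * k. T / 2)"
  proof (rule sum_strict_mono)
    fix i
    have "\<bar>x i\<bar> \<le> 1" by (simp add: x_def)
    then show "\<bar>exp (a * x i) - poly q (x i)\<bar> < T / 2"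
      using small unfolding T_def by (meson not_le)
  next
    show "{..<2 * k} \<noteq> {}" using k by (simp add: lessThan_empty_iff)
  qed simp
  finally show False by simp
qed

section \<open>Approximation degree of the exponential on [0, B]\<close>

definition exp_sup_error :: "real \<Rightarrow> real poly \<Rightarrow> real" where
  "exp_sup_error B p = (SUP x\<in>{0..B}. \<bar>poly p x - exp x\<bar>)"

definition exp_approximable :: "real \<Rightarrow> real \<Rightarrow> nat \<Rightarrow> bool" where
  "exp_approximable B \<delta> n \<longleftrightarrow> (\<exists>p. degree p = n \<and> 0 < degree p \<and> exp_sup_error B p < \<delta>)"

lemma approx_degree_exp_eq_Least: "approx_degree B \<delta> exp = (LEAST n. exp_approximable B \<delta> n)"
  unfolding approx_degree_def exp_approximable_def exp_sup_error_def ..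

lemma abs_poly_minus_exp_le_sup_error:
  assumes "0 \<le> x" "x \<le> B"
  shows "\<bar>poly p x - exp x\<bar> \<le> exp_sup_error B p"
proof -
  have "\<exists>x\<in>{0..B}. \<forall>y\<in>{0..B}. \<bar>poly p y - exp y\<bar> \<le> \<bar>poly p x - exp x\<bar>"
    using assms by (intro continuous_attains_sup) (auto intro!: continuous_intros)
  then have "bdd_above ((\<lambda>x. \<bar>poly p x - exp x\<bar>) ` {0..B})" by (auto intro: bdd_aboveI2)
  then show ?thesis
    unfolding exp_sup_error_def using assms by (intro cSUP_upper) auto
qed

lemma exp_sup_error_le:
  assumes "B \<ge> 0" "\<And>x. 0 \<le> x \<Longrightarrow> x \<le> B \<Longrightarrow> \<bar>poly p x - exp x\<bar> \<le> M"
  shows "exp_sup_error B p \<le> M"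
  unfolding exp_sup_error_def using assms by (intro cSUP_least) auto

text \<open>Adding a tiny multiple of \<open>x ^ n\<close> turns an approximant of degree at most \<open>n\<close> into one of
  degree exactly \<open>n\<close>.\<close>
lemma exp_approximable_if_error_le:
  fixes p0 :: "real poly"
  assumes B: "B > 0" and n: "n \<ge> 1" and dp: "degree p0 \<le> n" and \<eta>: "\<eta> < \<delta>"
    and err: "\<And>x. 0 \<le> x \<Longrightarrow> x \<le> B \<Longrightarrow> \<bar>poly p0 x - exp x\<bar> \<le> \<eta>"
  shows "exp_approximable B \<delta> n"
proof -
  define e0 where "e0 = (\<delta> - \<eta>) / (2 * (B ^ n + 1))"
  have Bn: "B ^ n \<ge> 0" using B by simp
  have e0: "e0 > 0" unfolding e0_def using \<eta> Bn by (intro divide_pos_pos) auto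
  define e where "e = (if coeff p0 n + e0 \<noteq> 0 then e0 else e0 / 2)"
  have e: "e > 0" "e \<le> e0" "coeff p0 n + e \<noteq> 0" using e0 by (auto simp: e_def)
  define p where "p = p0 + monom e n"
  have "degree p \<le> n" unfolding p_def
    using dp degree_monom_le[of e n] by (intro degree_add_le) auto
  moreover have "coeff p n \<noteq> 0" using e by (simp add: p_def)
  ultimately have dpn: "degree p = n" by (simp add: le_antisym le_degree)
  have "e * B ^ n < \<delta> - \<eta>"
  proof -
    have "e * B ^ n \<le> e0 * B ^ n" using e Bn by (intro mult_right_mono) auto
    also have "\<dots> = (\<delta> - \<eta>) * (B ^ n / (2 * (B ^ n + 1)))" by (simp add: e0_def)
    also have "\<dots> < (\<delta> - \<eta>) * 1" using \<eta> Bn by (intro mult_strict_left_mono) auto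
    finally show ?thesis by simp
  qed
  moreover have "exp_sup_error B p \<le> \<eta> + e * B ^ n"
  proof (rule exp_sup_error_le)
    fix x assume x: "0 \<le> x" "x \<le> B"
    have "\<bar>poly p x - exp x\<bar> \<le> \<bar>poly p0 x - exp x\<bar> + \<bar>e * x ^ n\<bar>"
      by (simp add: p_def poly_monom)
    also have "\<bar>e * x ^ n\<bar> \<le> e * B ^ n" using x e by (simp add: abs_mult power_mono)
    finally show "\<bar>poly p x - exp x\<bar> \<le> \<eta> + e * B ^ n" using err[OF x] by linarith
  qed (use B in auto)
  ultimately show ?thesis using dpn n unfolding exp_approximable_def by (intro exI[of _ p]) auto
qed

lemma exp_approximable_if_cheb_bound:
  fixes B L \<theta> :: real
  assumes B: "B > 0" and n: "n \<ge> 1" and \<theta>: "\<theta> \<ge> 0"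
    and bound: "B/2 * (1 + cosh \<theta>) + ln 2 - real (n + 1) * \<theta> + L < 0"
  shows "exp_approximable B (exp (- L)) n"
proof -
  define a where "a = B / 2"
  have a: "a > 0" using B by (simp add: a_def)
  define \<eta> where "\<eta> = 2 * exp (a * cosh \<theta> - real (n + 1) * \<theta>)"
  have "exp a * \<eta> = exp (a + ln 2 + a * cosh \<theta> - real (n + 1) * \<theta>)"
    by (simp add: \<eta>_def exp_add exp_diff)
  also have "\<dots> < exp (- L)"
    using bound unfolding a_def distrib_left by simp
  finally have "exp a * \<eta> < exp (- L)" .
  then have "\<eta> < exp (- L) / exp a" by (simp add: field_simps)
  then obtain q where q: "degree q \<le> n"
      "\<And>t. \<bar>t\<bar> \<le> 1 \<Longrightarrow> \<bar>exp (a * t) - poly q t\<bar> \<le> \<eta> + (exp (- L) / exp a - \<eta>) / 2"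
    using cheb_approx_exp[of a \<theta> "(exp (- L) / exp a - \<eta>) / 2" n] a \<theta> unfolding \<eta>_def by auto
  define p0 where "p0 = smult (exp a) (pcompose q [:-1, 1/a:])"
  have "degree p0 \<le> n" unfolding p0_def
    using degree_pcompose_le[of q "[:-1, 1/a:]"] q(1) by (simp add: order_trans)
  moreover have "\<bar>poly p0 x - exp x\<bar> \<le> exp a * (\<eta> + (exp (- L) / exp a - \<eta>) / 2)"
    if x: "0 \<le> x" "x \<le> B" for x
  proof -
    define t where "t = x / a - 1"
    have t: "\<bar>t\<bar> \<le> 1" using x a by (simp add: t_def a_def abs_le_iff field_simps)
    have ex: "exp x = exp a * exp (a * t)" using a by (simp add: t_def field_simps exp_add[symmetric])
    have "poly p0 x = exp a * poly q t" by (simp add: p0_def poly_pcompose t_def field_simps)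
    then have "\<bar>poly p0 x - exp x\<bar> = exp a * \<bar>exp (a * t) - poly q t\<bar>"
      by (simp add: ex abs_mult right_diff_distrib[symmetric] abs_minus_commute)
    then show ?thesis using q(2)[OF t] by simp
  qed
  moreover have "exp a * (\<eta> + (exp (- L) / exp a - \<eta>) / 2) < exp (- L)"
    using \<open>exp a * \<eta> < exp (- L)\<close> by (simp add: field_simps)
  ultimately show ?thesis using exp_approximable_if_error_le[OF B n] by blast
qed

text \<open>This makes the \<open>LEAST\<close> in \<open>approx_degree\<close> range over a nonempty set.\<close>
lemma exp_approximable_exists:
  assumes "B > 0" "\<delta> > 0"
  shows "\<exists>n. exp_approximable B \<delta> n"
proof -
  obtain n :: nat where n: "B/2 * (1 + cosh 1) + ln 2 - ln \<delta> < real n"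
    using reals_Archimedean2 by blast
  have "exp_approximable B (exp (- (- ln \<delta>))) (n + 1)"
    using n exp_approximable_if_cheb_bound[OF \<open>B > 0\<close>, of "n + 1" 1 "- ln \<delta>"] by simp
  then show ?thesis using \<open>\<delta> > 0\<close> by auto
qed

lemma approx_degree_le:
  "exp_approximable B \<delta> n \<Longrightarrow> approx_degree B \<delta> exp \<le> n"
  unfolding approx_degree_exp_eq_Least by (rule Least_le)

lemma approx_degree_ge_if_le:
  fixes B \<delta> :: real
  assumes B: "B > 0" and k: "k \<ge> 1" and \<delta>: "0 < \<delta>"
    and small: "\<delta> \<le> exp (B/2) * ((B/4) ^ (k + 2 * j) / (fact j * fact (k + j)) / 2)"
  shows "k \<le> approx_degree B \<delta> exp"
proof (rule ccontr)
  assume "\<not> ?thesis"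
  moreover obtain p where p: "degree p = approx_degree B \<delta> exp" "exp_sup_error B p < \<delta>"
    using LeastI_ex[OF exp_approximable_exists[OF B \<delta>]]
    unfolding approx_degree_exp_eq_Least exp_approximable_def by blast
  define a where "a = B / 2"
  have a: "a > 0" using B by (simp add: a_def)
  define q where "q = smult (exp (-a)) (pcompose p [:a, a:])"
  have "degree q \<le> degree p" unfolding q_def
    using degree_pcompose_le[of p "[:a, a:]"] by (simp add: order_trans)
  ultimately have "degree q < k" using p(1) by simp
  then obtain t where t: "\<bar>t\<bar> \<le> 1"
      "(a/2) ^ (k + 2 * j) / (fact j * fact (k + j)) / 2 \<le> \<bar>exp (a * t) - poly q t\<bar>"
    using exp_minus_poly_lower_bound[of a k q j] a k by auto
  define x where "x = a + a * t"
  have "a * (-1) \<le> a * t" "a * t \<le> a * 1" using t(1) a by (intro mult_left_mono; simp)+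
  then have x: "0 \<le> x" "x \<le> B" by (auto simp: x_def a_def)
  have "exp (a * t) = exp (-a) * exp x" by (simp add: x_def exp_add[symmetric])
  moreover have "poly q t = exp (-a) * poly p x" by (simp add: q_def poly_pcompose x_def algebra_simps)
  ultimately have "\<bar>exp (a * t) - poly q t\<bar> = exp (-a) * \<bar>poly p x - exp x\<bar>"
    by (simp add: abs_mult abs_minus_commute flip: right_diff_distrib)
  then have "exp a * ((a/2) ^ (k + 2 * j) / (fact j * fact (k + j)) / 2) \<le> \<bar>poly p x - exp x\<bar>"
    using t(2) mult_left_mono[OF t(2), of "exp a"] by (simp add: exp_minus field_simps)
  then have "\<delta> \<le> exp_sup_error B p"
    using small abs_poly_minus_exp_le_sup_error[OF x, of p] by (simp add: a_def)
  then show False using p(2) by simp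
qed

lemma approx_degree_ge:
  fixes B L :: real
  assumes B: "B > 0" and k: "k \<ge> 1"
    and bound: "ln (fact j) + ln (fact (k + j)) + ln 2 - B/2 - real (k + 2 * j) * ln (B/4) \<le> L"
  shows "k \<le> approx_degree B (exp (- L)) exp"
proof (rule approx_degree_ge_if_le[OF B k exp_gt_zero])
  have "- L \<le> ln (exp (B/2) * ((B/4) ^ (k + 2 * j) / (fact j * fact (k + j)) / 2))"
    using B bound by (simp add: ln_mult ln_div ln_realpow)
  then show "exp (- L) \<le> exp (B/2) * ((B/4) ^ (k + 2 * j) / (fact j * fact (k + j)) / 2)"
    using B by (subst (asm) ln_ge_iff) auto
qed

lemma ln_fact_le:
  assumes "n \<ge> 1"
  shows "ln (fact n) \<le> 1 + (real n + 1) * ln (real n) - real n"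
  using assms
proof (induction n rule: dec_induct)
  case (step n)
  have n: "real n \<ge> 1" using step by simp
  have "ln (real n / (real n + 1)) \<le> real n / (real n + 1) - 1"
    using n by (intro ln_le_minus_one) auto
  then have "1 \<le> (real n + 1) * (ln (real n + 1) - ln (real n))"
    using n by (simp add: ln_div field_simps)
  moreover have "ln (fact (Suc n)) = ln (real n + 1) + ln (fact n)"
    by (simp add: ln_mult add.commute)
  ultimately show ?case using step.IH by (simp add: algebra_simps)
qed simp

lemma ln_fact_le_mult_ln: "ln (fact n) \<le> real n * ln (real n)"
proof (cases "n = 0")
  case False
  have "fact n \<le> real n ^ n" using fact_le_power[of n] by simp
  then have "ln (fact n) \<le> ln (real n ^ n)" by (intro ln_mono) auto
  then show ?thesis using False by (simp add: ln_realpow)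
qed simp

lemma G_eq_arsinh: "G x = sqrt (x\<^sup>2 + 1) - x * arsinh x"
proof -
  have "ln (sqrt (x\<^sup>2 + 1) - x) = - arsinh x"
    using arsinh_real_def[of "- x"] by (simp add: uminus_add_conv_diff)
  then show ?thesis by (simp add: G_def)
qed

lemma G_has_real_derivative: "(G has_real_derivative - arsinh x) (at x)"
proof -
  have G: "G = (\<lambda>x. sqrt (x\<^sup>2 + 1) - x * arsinh x)" using G_eq_arsinh by auto
  have pos: "0 < x\<^sup>2 + 1" by (simp add: add_nonneg_pos)
  have "((\<lambda>x. x\<^sup>2 + 1) has_real_derivative 2 * x) (at x)"
    by (rule derivative_eq_intros refl | simp)+
  from DERIV_chain2[OF DERIV_real_sqrt[OF pos] this]
  have "((\<lambda>x. sqrt (x\<^sup>2 + 1)) has_real_derivative x / sqrt (x\<^sup>2 + 1)) (at x)"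
    by (simp add: field_simps)
  from DERIV_diff[OF this DERIV_mult[OF DERIV_ident arsinh_real_has_field_derivative]]
  show ?thesis unfolding G using pos by (simp add: field_simps)
qed

lemma G_strict_antimono:
  assumes "0 < x" "x < y"
  shows "G y < G x"
  using assms by (intro DERIV_neg_imp_decreasing[OF \<open>x < y\<close>]) (auto intro!: exI G_has_real_derivative)

lemma tendsto_G: "(f \<longlongrightarrow> c) F \<Longrightarrow> ((\<lambda>k. G (f k)) \<longlongrightarrow> G c) F"
  unfolding G_eq_arsinh by (intro tendsto_intros)

text \<open>The exponent of the Chebyshev lower bound with \<open>k = c a\<close>, \<open>j = s a\<close>, read per unit of \<open>a\<close>;
  maximising over \<open>s\<close> gives \<open>s (c + s) = 1/4\<close>, and at the maximum it equals \<open>G c\<close>.\<close>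
lemma G_eq_max_exponent:
  fixes c :: real
  defines "s \<equiv> (sqrt (c\<^sup>2 + 1) - c) / 2"
  shows "- (c + 2 * s) * ln 2 - s * ln s + s - (c + s) * ln (c + s) + c + s = G c"
proof -
  define \<theta> where "\<theta> = arsinh c"
  have "s = exp (- \<theta>) / 2"
    using cosh_minus_sinh[of \<theta>] by (simp add: s_def \<theta>_def cosh_arsinh_real)
  then have ln_s: "ln s = - \<theta> - ln 2" by (subst (1) \<open>s = _\<close>) (simp add: ln_div)
  have "c + s = exp \<theta> / 2"
    using cosh_plus_sinh[of \<theta>] by (simp add: s_def \<theta>_def cosh_arsinh_real field_simps)
  then have ln_cs: "ln (c + s) = \<theta> - ln 2" by (subst \<open>c + s = _\<close>) (simp add: ln_div)
  have "sqrt (c\<^sup>2 + 1) = c + 2 * s" by (simp add: s_def field_simps)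
  then show ?thesis
    unfolding ln_s ln_cs G_eq_arsinh \<theta>_def[symmetric] by (simp add: algebra_simps)
qed

lemma tendsto_divide_of_dist_le:
  fixes N X :: "nat \<Rightarrow> real"
  assumes X: "filterlim X at_top sequentially"
    and near: "eventually (\<lambda>k. \<bar>N k - c * X k\<bar> \<le> C) sequentially"
  shows "(\<lambda>k. N k / X k) \<longlonglongrightarrow> c"
proof (rule tendsto_sandwich)
  have C: "(\<lambda>k. C / X k) \<longlonglongrightarrow> 0"
    by (rule tendsto_divide_0[OF tendsto_const filterlim_at_top_imp_at_infinity[OF X]])
  show "(\<lambda>k. c - C / X k) \<longlonglongrightarrow> c" "(\<lambda>k. c + C / X k) \<longlonglongrightarrow> c"
    using tendsto_diff[OF tendsto_const C] tendsto_add[OF tendsto_const C] by simp_all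
  have "eventually (\<lambda>k. X k > 0) sequentially" using X by (simp add: filterlim_at_top_dense)
  then have "eventually (\<lambda>k. c - C / X k \<le> N k / X k \<and> N k / X k \<le> c + C / X k) sequentially"
    using near
  proof eventually_elim
    case (elim k)
    have "N k / X k - c = (N k - c * X k) / X k" using elim(1) by (simp add: field_simps)
    then have "\<bar>N k / X k - c\<bar> = \<bar>N k - c * X k\<bar> / X k" using elim(1) by (simp add: abs_divide)
    also have "\<dots> \<le> C / X k" using elim by (simp add: divide_right_mono)
    finally show ?case by (simp add: abs_le_iff)
  qed
  then show "eventually (\<lambda>k. c - C / X k \<le> N k / X k) sequentially"
    "eventually (\<lambda>k. N k / X k \<le> c + C / X k) sequentially"
    by (auto elim: eventually_mono)
qed

lemma tendsto_divide_of_eventual_bounds: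
  fixes d X :: "nat \<Rightarrow> real"
  assumes X: "filterlim X at_top sequentially" and c: "c > 0"
    and lower: "\<And>c'. 0 < c' \<Longrightarrow> c' < c \<Longrightarrow> eventually (\<lambda>k. c' * X k \<le> d k) sequentially"
    and upper: "\<And>c'. c < c' \<Longrightarrow> eventually (\<lambda>k. d k \<le> c' * X k) sequentially"
  shows "(\<lambda>k. d k / X k) \<longlonglongrightarrow> c"
proof (rule order_tendstoI)
  have X_pos: "eventually (\<lambda>k. X k > 0) sequentially" using X by (simp add: filterlim_at_top_dense)
  fix a assume "a < c"
  define c' where "c' = (max a 0 + c) / 2"
  have c': "0 < c'" "c' < c" "a < c'" using c \<open>a < c\<close> by (auto simp: c'_def)
  show "eventually (\<lambda>k. a < d k / X k) sequentially"
    using lower[OF c'(1,2)] X_pos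
  proof eventually_elim
    case (elim k)
    then have "c' \<le> d k / X k" by (simp add: pos_le_divide_eq)
    then show ?case using c'(3) by linarith
  qed
next
  have X_pos: "eventually (\<lambda>k. X k > 0) sequentially" using X by (simp add: filterlim_at_top_dense)
  fix a assume "c < a"
  define c' where "c' = (a + c) / 2"
  have c': "c < c'" "c' < a" using \<open>c < a\<close> by (auto simp: c'_def)
  show "eventually (\<lambda>k. d k / X k < a) sequentially"
    using upper[OF c'(1)] X_pos
  proof eventually_elim
    case (elim k)
    then have "d k / X k \<le> c'" by (simp add: pos_divide_le_eq)
    then show ?case using c'(2) by linarith
  qed
qed

lemma nat_ceiling_asymp:
  fixes X :: "nat \<Rightarrow> real" and c :: real
  assumes X: "filterlim X at_top sequentially" and c: "c > 0"
  shows "eventually (\<lambda>k. 2 \<le> nat \<lceil>c * X k\<rceil> \<and> c * X k \<le> real (nat \<lceil>c * X k\<rceil>)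
           \<and> real (nat \<lceil>c * X k\<rceil>) < c * X k + 1) sequentially"
    and "(\<lambda>k. real (nat \<lceil>c * X k\<rceil>) / X k) \<longlonglongrightarrow> c"
proof -
  have "eventually (\<lambda>k. 1 / c < X k) sequentially" using X by (simp add: filterlim_at_top_dense)
  then have "eventually (\<lambda>k. (2 \<le> nat \<lceil>c * X k\<rceil> \<and> c * X k \<le> real (nat \<lceil>c * X k\<rceil>)
      \<and> real (nat \<lceil>c * X k\<rceil>) < c * X k + 1) \<and> \<bar>real (nat \<lceil>c * X k\<rceil>) - c * X k\<bar> \<le> 1) sequentially"
  proof eventually_elim
    case (elim k)
    have "1 < \<lceil>c * X k\<rceil>" using elim c by (simp add: less_ceiling_iff field_simps)
    then have "2 \<le> nat \<lceil>c * X k\<rceil>" "real (nat \<lceil>c * X k\<rceil>) = of_int \<lceil>c * X k\<rceil>"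
      by (linarith | presburger)+
    then show ?case using ceiling_correct[of "c * X k"] by (auto simp: abs_le_iff)
  qed
  then show "eventually (\<lambda>k. 2 \<le> nat \<lceil>c * X k\<rceil> \<and> c * X k \<le> real (nat \<lceil>c * X k\<rceil>)
      \<and> real (nat \<lceil>c * X k\<rceil>) < c * X k + 1) sequentially"
    and "(\<lambda>k. real (nat \<lceil>c * X k\<rceil>) / X k) \<longlonglongrightarrow> c"
    by (auto elim: eventually_mono intro: tendsto_divide_of_dist_le[OF X, where C = 1])
qed

lemma approx_degree_less_if_G:
  fixes B L :: real
  assumes B: "B > 0" and N: "N \<ge> 2"
    and bound: "B / 2 * (1 + G (real N / (B / 2))) + ln 2 + L < 0"
  shows "approx_degree B (exp (- L)) exp < N"
proof -
  define c where "c = real N / (B / 2)"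
  have n: "N - 1 \<ge> 1" and N1: "N - 1 + 1 = N" using N by auto
  have "0 < c" using B N by (simp add: c_def)
  then have \<theta>: "0 \<le> arsinh c" by (metis arsinh_real_pos_iff less_imp_le)
  have "B / 2 * (1 + cosh (arsinh c)) - real N * arsinh c = B / 2 * (1 + G c)"
    using B by (simp add: c_def G_eq_arsinh cosh_arsinh_real field_simps)
  then have "B / 2 * (1 + cosh (arsinh c)) + ln 2 - real (N - 1 + 1) * arsinh c + L < 0"
    using bound unfolding N1 c_def[symmetric] by linarith
  from exp_approximable_if_cheb_bound[OF B n \<theta> this] have "approx_degree B (exp (- L)) exp \<le> N - 1"
    by (rule approx_degree_le)
  then show ?thesis using N by linarith
qed

lemma approx_degree_ge_if_stirling_bound:
  fixes B L :: real
  assumes B: "B > 0" and K: "K \<ge> 1" and J: "J \<ge> 1"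
    and bound: "0 < B / 2 + real (K + 2 * J) * ln (B / 4)
      - (1 + (real J + 1) * ln (real J) - real J)
      - (1 + (real K + real J + 1) * ln (real K + real J) - (real K + real J)) - ln 2 + L"
  shows "K \<le> approx_degree B (exp (- L)) exp"
proof (rule approx_degree_ge[OF B K])
  show "ln (fact J) + ln (fact (K + J)) + ln 2 - B / 2 - real (K + 2 * J) * ln (B / 4) \<le> L"
    using ln_fact_le[OF J] ln_fact_le[of "K + J"] J bound by simp
qed

lemma approx_degree_less_if_log_bound:
  fixes B L :: real
  assumes B: "B > 0" and N: "N \<ge> 2" and NB: "B \<le> real N"
    and bound: "9/16 * B + real N + ln 2 + L - real N * ln (4 * real N / B) < 0"
  shows "approx_degree B (exp (- L)) exp < N"
proof -
  define \<rho> where "\<rho> = 4 * real N / B"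
  have n: "N - 1 \<ge> 1" and N1: "N - 1 + 1 = N" using N by auto
  have N0: "0 < real N" using N by simp
  have \<rho>: "1 \<le> \<rho>" using NB B by (simp add: \<rho>_def field_simps)
  have "B / 2 * cosh (ln \<rho>) = real N + B * B / (16 * real N)"
    using \<rho> N0 B by (simp add: cosh_ln_real \<rho>_def field_simps)
  also have "B * B / (16 * real N) \<le> B / 16"
    using NB N0 B by (simp add: field_simps mult_right_mono)
  finally have "B / 2 * (1 + cosh (ln \<rho>)) + ln 2 - real (N - 1 + 1) * ln \<rho> + L < 0"
    using bound unfolding \<rho>_def N1 distrib_left by linarith
  from exp_approximable_if_cheb_bound[OF B n _ this] \<rho>
  have "approx_degree B (exp (- L)) exp \<le> N - 1" by (simp add: approx_degree_le)
  then show ?thesis using N by linarith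
qed

lemma approx_degree_ge_if_log_bound:
  fixes B L :: real
  assumes B: "B > 0" and K: "K \<ge> 1" and bound: "real K * ln (4 * real K / B) + ln 2 \<le> L"
  shows "K \<le> approx_degree B (exp (- L)) exp"
proof (rule approx_degree_ge[OF B K])
  have "real K * ln (4 * real K / B) = real K * ln (real K) - real K * ln (B / 4)"
    using K B by (simp add: ln_div ln_mult algebra_simps)
  then show "ln (fact 0) + ln (fact (K + 0)) + ln 2 - B / 2 - real (K + 2 * 0) * ln (B / 4) \<le> L"
    using ln_fact_le_mult_ln[of K] B bound by simp
qed

section \<open>The regime of B proportional to L\<close>

lemma eventually_approx_degree_le_linear:
  fixes B L :: "nat \<Rightarrow> real" and c \<rho> :: real
  assumes B: "\<And>k. B k > 0" and B_lim: "filterlim B at_top sequentially"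
    and L_lim: "(\<lambda>k. L k / (B k / 2)) \<longlonglongrightarrow> \<rho>"
    and c: "c > 0" and below: "1 + G c + \<rho> < 0"
  shows "eventually (\<lambda>k. real (approx_degree (B k) (exp (- L k)) exp) \<le> c * (B k / 2)) sequentially"
proof -
  define a where "a k = B k / 2" for k
  have a: "a k > 0" for k using B[of k] by (simp add: a_def)
  have a_lim: "filterlim a at_top sequentially"
    unfolding a_def using filterlim_tendsto_pos_mult_at_top[OF tendsto_const[of "1/2"] _ B_lim] by simp
  define N where "N k = nat \<lceil>c * a k\<rceil>" for k
  define c' where "c' k = real (N k) / a k" for k
  note N = nat_ceiling_asymp[OF a_lim c, folded N_def]
  have c'_lim: "c' \<longlonglongrightarrow> c" unfolding c'_def by (rule N(2))
  have "(\<lambda>k. 1 + G (c' k) + ln 2 / a k + L k / a k) \<longlonglongrightarrow> 1 + G c + 0 + \<rho>"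
    using L_lim unfolding a_def[symmetric]
    by (intro tendsto_intros tendsto_G c'_lim tendsto_divide_0[OF tendsto_const]
        filterlim_at_top_imp_at_infinity[OF a_lim])
  then have "eventually (\<lambda>k. 1 + G (c' k) + ln 2 / a k + L k / a k < 0) sequentially"
    by (rule order_tendstoD(2)) (use below in simp)
  then show ?thesis
    using N(1)
  proof eventually_elim
    case (elim k)
    have "B k / 2 * (1 + G (c' k)) + ln 2 + L k = a k * (1 + G (c' k) + ln 2 / a k + L k / a k)"
      using a[of k] by (simp add: a_def field_simps)
    with elim(1) a[of k] have "B k / 2 * (1 + G (c' k)) + ln 2 + L k < 0" by (simp add: mult_pos_neg)
    with elim(2) have "approx_degree (B k) (exp (- L k)) exp < N k"
      by (intro approx_degree_less_if_G[OF B]) (simp_all add: c'_def a_def)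
    then have "real (approx_degree (B k) (exp (- L k)) exp + 1) \<le> real (N k)" by (intro of_nat_mono) simp
    then show ?case using elim(2) by (simp add: a_def)
  qed
qed

lemma ln_fact_bound_exponent_eq:
  fixes a K J :: real
  assumes a: "a > 0" and K: "K > 0" and J: "J > 0"
  shows "(a + (K + 2 * J) * ln (a / 2) - (1 + (J + 1) * ln J - J)
            - (1 + (K + J + 1) * ln (K + J) - (K + J)) - ln 2) / a
    = 1 - (K/a + 2 * (J/a)) * ln 2 - (J/a + 1/a) * ln (J/a) + J/a
        - (K/a + J/a + 1/a) * ln (K/a + J/a) + K/a + J/a - (2 * (ln a / a) + (2 + ln 2) * (1 / a))"
proof -
  have l1: "ln (a / 2) = ln a - ln 2" using a by (simp add: ln_div)
  have l2: "ln J = ln (J/a) + ln a" using a J by (simp add: ln_div)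
  have l3: "ln (K + J) = ln (K/a + J/a) + ln a"
    using a K J by (simp add: ln_div flip: add_divide_distrib)
  show ?thesis unfolding l1 l2 l3 using a by (simp add: field_simps)
qed

lemma ln_fact_bound_exponent_tendsto:
  fixes a K J :: "nat \<Rightarrow> real" and c s :: real
  assumes a_lim: "filterlim a at_top sequentially"
    and K_lim: "(\<lambda>k. K k / a k) \<longlonglongrightarrow> c" and J_lim: "(\<lambda>k. J k / a k) \<longlonglongrightarrow> s"
    and c: "c > 0" and s: "s > 0"
  shows "(\<lambda>k. (a k + (K k + 2 * J k) * ln (a k / 2) - (1 + (J k + 1) * ln (J k) - J k)
            - (1 + (K k + J k + 1) * ln (K k + J k) - (K k + J k)) - ln 2) / a k)
         \<longlonglongrightarrow> 1 + (- (c + 2 * s) * ln 2 - s * ln s + s - (c + s) * ln (c + s) + c + s)"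
proof -
  define c' s' where "c' k = K k / a k" and "s' k = J k / a k" for k
  have inv_a: "(\<lambda>k. 1 / a k) \<longlonglongrightarrow> 0"
    by (rule tendsto_divide_0[OF tendsto_const filterlim_at_top_imp_at_infinity[OF a_lim]])
  have "((\<lambda>x::real. ln x / x) \<longlongrightarrow> 0) at_top" by real_asymp
  from filterlim_compose[OF this a_lim] have ln_a: "(\<lambda>k. ln (a k) / a k) \<longlonglongrightarrow> 0" .
  have "(\<lambda>k. 1 - (c' k + 2 * s' k) * ln 2 - (s' k + 1 / a k) * ln (s' k) + s' k
        - (c' k + s' k + 1 / a k) * ln (c' k + s' k) + c' k + s' k
        - (2 * (ln (a k) / a k) + (2 + ln 2) * (1 / a k)))
      \<longlonglongrightarrow> 1 - (c + 2 * s) * ln 2 - (s + 0) * ln s + s - (c + s + 0) * ln (c + s) + c + s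
        - (2 * 0 + (2 + ln 2) * 0)"
    unfolding c'_def s'_def by (intro tendsto_intros K_lim J_lim inv_a ln_a) (use c s in auto)
  then have "(\<lambda>k. 1 - (c' k + 2 * s' k) * ln 2 - (s' k + 1 / a k) * ln (s' k) + s' k
        - (c' k + s' k + 1 / a k) * ln (c' k + s' k) + c' k + s' k
        - (2 * (ln (a k) / a k) + (2 + ln 2) * (1 / a k)))
      \<longlonglongrightarrow> 1 + (- (c + 2 * s) * ln 2 - s * ln s + s - (c + s) * ln (c + s) + c + s)"
    by (simp add: algebra_simps)
  moreover have "eventually (\<lambda>k. a k > 0) sequentially" using a_lim by (simp add: filterlim_at_top_dense)
  with order_tendstoD(1)[OF K_lim c] order_tendstoD(1)[OF J_lim s]
  have "eventually (\<lambda>k. 1 - (c' k + 2 * s' k) * ln 2 - (s' k + 1 / a k) * ln (s' k) + s' k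
        - (c' k + s' k + 1 / a k) * ln (c' k + s' k) + c' k + s' k
        - (2 * (ln (a k) / a k) + (2 + ln 2) * (1 / a k))
      = (a k + (K k + 2 * J k) * ln (a k / 2) - (1 + (J k + 1) * ln (J k) - J k)
            - (1 + (K k + J k + 1) * ln (K k + J k) - (K k + J k)) - ln 2) / a k) sequentially"
  proof eventually_elim
    case (elim k)
    then have "K k > 0" "J k > 0" by (simp_all add: zero_less_divide_iff)
    then show ?case unfolding c'_def s'_def by (rule ln_fact_bound_exponent_eq[symmetric, OF elim(3)])
  qed
  ultimately show ?thesis by (rule Lim_transform_eventually)
qed

lemma eventually_approx_degree_ge_linear:
  fixes B L :: "nat \<Rightarrow> real" and c \<rho> :: real
  assumes B: "\<And>k. B k > 0" and B_lim: "filterlim B at_top sequentially"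
    and L_lim: "(\<lambda>k. L k / (B k / 2)) \<longlonglongrightarrow> \<rho>"
    and c: "c > 0" and above: "1 + G c + \<rho> > 0"
  shows "eventually (\<lambda>k. c * (B k / 2) \<le> real (approx_degree (B k) (exp (- L k)) exp)) sequentially"
proof -
  define a where "a k = B k / 2" for k
  have a: "a k > 0" for k using B[of k] by (simp add: a_def)
  have a_lim: "filterlim a at_top sequentially"
    unfolding a_def using filterlim_tendsto_pos_mult_at_top[OF tendsto_const[of "1/2"] _ B_lim] by simp
  define s where "s = (sqrt (c\<^sup>2 + 1) - c) / 2"
  have s: "s > 0" using real_less_rsqrt[of c "c\<^sup>2 + 1"] by (simp add: s_def)
  define K J where "K k = nat \<lceil>c * a k\<rceil>" and "J k = nat \<lceil>s * a k\<rceil>" for k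
  note K = nat_ceiling_asymp[OF a_lim c, folded K_def] and J = nat_ceiling_asymp[OF a_lim s, folded J_def]
  define E where "E k = a k + (real (K k) + 2 * real (J k)) * ln (a k / 2)
      - (1 + (real (J k) + 1) * ln (real (J k)) - real (J k))
      - (1 + (real (K k) + real (J k) + 1) * ln (real (K k) + real (J k)) - (real (K k) + real (J k))) - ln 2"
    for k
  have "(\<lambda>k. E k / a k + L k / a k) \<longlonglongrightarrow> 1 + G c + \<rho>"
    using ln_fact_bound_exponent_tendsto[OF a_lim K(2) J(2) c s] L_lim
    unfolding E_def a_def[symmetric] G_eq_max_exponent[of c, folded s_def] by (intro tendsto_add)
  then have "eventually (\<lambda>k. E k / a k + L k / a k > 0) sequentially"
    by (rule order_tendstoD(1)) (use above in simp)
  then show ?thesis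
    using K(1) J(1)
  proof eventually_elim
    case (elim k)
    have "K k \<ge> 1" "J k \<ge> 1" using elim(2,3) by simp_all
    have "- E k < L k" using elim(1) a[of k] by (simp add: field_simps)
    then have "0 < B k / 2 + real (K k + 2 * J k) * ln (B k / 4)
        - (1 + (real (J k) + 1) * ln (real (J k)) - real (J k))
        - (1 + (real (K k) + real (J k) + 1) * ln (real (K k) + real (J k)) - (real (K k) + real (J k)))
        - ln 2 + L k"
      by (simp add: E_def a_def)
    from approx_degree_ge_if_stirling_bound[OF B \<open>K k \<ge> 1\<close> \<open>J k \<ge> 1\<close> this]
    have "real (K k) \<le> real (approx_degree (B k) (exp (- L k)) exp)" by simp
    then show ?case using elim(2) by (simp add: a_def)
  qed
qed

lemma approx_degree_linear_regime:
  fixes B L :: "nat \<Rightarrow> real" and c \<rho> :: real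
  assumes B: "\<And>k. B k > 0" and B_lim: "filterlim B at_top sequentially"
    and L_lim: "(\<lambda>k. L k / (B k / 2)) \<longlonglongrightarrow> \<rho>"
    and c: "c > 0" and root: "1 + G c + \<rho> = 0"
  shows "(\<lambda>k. real (approx_degree (B k) (exp (- L k)) exp) / (B k / 2)) \<longlonglongrightarrow> c"
proof (rule tendsto_divide_of_eventual_bounds[OF _ c])
  show "filterlim (\<lambda>k. B k / 2) at_top sequentially"
    using filterlim_tendsto_pos_mult_at_top[OF tendsto_const[of "1/2"] _ B_lim] by simp
next
  fix c' assume c': "0 < c'" "c' < c"
  then have "1 + G c' + \<rho> > 0" using G_strict_antimono[OF c'] root by simp
  then show "eventually (\<lambda>k. c' * (B k / 2) \<le> real (approx_degree (B k) (exp (- L k)) exp)) sequentially"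
    by (rule eventually_approx_degree_ge_linear[OF B B_lim L_lim c'(1)])
next
  fix c' assume "c < c'"
  then have "1 + G c' + \<rho> < 0" using G_strict_antimono[OF c \<open>c < c'\<close>] root by simp
  then show "eventually (\<lambda>k. real (approx_degree (B k) (exp (- L k)) exp) \<le> c' * (B k / 2)) sequentially"
    using c \<open>c < c'\<close> by (intro eventually_approx_degree_le_linear[OF B B_lim L_lim]) auto
qed

section \<open>The regime B = o(L)\<close>

lemma le_div_ln_div:
  fixes B L :: real
  assumes "B > 0" "1 < L / B"
  shows "B \<le> L / ln (L / B)"
proof -
  have "ln (L / B) \<le> L / B - 1" using assms by (intro ln_le_minus_one) simp
  then have "ln (L / B) * B \<le> L" using assms by (simp add: field_simps)
  then show ?thesis using assms by (simp add: pos_le_divide_eq mult.commute)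
qed

lemma filterlim_div_ln_div_at_top:
  fixes B L :: "nat \<Rightarrow> real"
  assumes B: "\<And>k. B k \<ge> 1" and y_lim: "filterlim (\<lambda>k. L k / B k) at_top sequentially"
  shows "filterlim (\<lambda>k. L k / ln (L k / B k)) at_top sequentially"
proof (rule filterlim_at_top_mono)
  have "filterlim (\<lambda>y::real. y / ln y) at_top at_top" by real_asymp
  from filterlim_compose[OF this y_lim]
  show "filterlim (\<lambda>k. (L k / B k) / ln (L k / B k)) at_top sequentially" .
  have "eventually (\<lambda>k. 1 < L k / B k) sequentially" using y_lim by (simp add: filterlim_at_top_dense)
  then show "eventually (\<lambda>k. (L k / B k) / ln (L k / B k) \<le> L k / ln (L k / B k)) sequentially"
  proof eventually_elim
    case (elim k)
    have "0 < B k" using B[of k] by simp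
    with elim have "0 < L k" by (simp add: field_simps)
    have "0 < ln (L k / B k)" using elim by simp
    then have "ln (L k / B k) \<le> B k * ln (L k / B k)" using B[of k] by (simp add: mult_le_cancel_right1)
    then have "L k / (B k * ln (L k / B k)) \<le> L k / ln (L k / B k)"
      using \<open>0 < L k\<close> \<open>0 < B k\<close> \<open>0 < ln (L k / B k)\<close> by (intro divide_left_mono) auto
    then show ?case by simp
  qed
qed

lemma log_regime_ratio_tendsto:
  fixes B L K :: "nat \<Rightarrow> real" and u :: real
  assumes B: "\<And>k. B k > 0" and y_lim: "filterlim (\<lambda>k. L k / B k) at_top sequentially"
    and K_lim: "(\<lambda>k. K k / (L k / ln (L k / B k))) \<longlonglongrightarrow> u" and u: "u > 0"
  shows "(\<lambda>k. K k * ln (4 * K k / B k) / L k) \<longlonglongrightarrow> u"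
proof -
  define y v where "y k = L k / B k" and "v k = K k / (L k / ln (y k))" for k
  have "((\<lambda>y::real. 1 / ln y) \<longlongrightarrow> 0) at_top" "((\<lambda>y::real. ln (ln y) / ln y) \<longlongrightarrow> 0) at_top"
    by real_asymp+
  from this[THEN filterlim_compose, OF y_lim]
  have "(\<lambda>k. v k * ((ln 4 + ln (v k)) * (1 / ln (y k)) + 1 - ln (ln (y k)) / ln (y k)))
      \<longlonglongrightarrow> u * ((ln 4 + ln u) * 0 + 1 - 0)"
    unfolding v_def y_def using K_lim u by (intro tendsto_intros) auto
  moreover have "eventually (\<lambda>k. 1 < y k \<and> 0 < v k) sequentially"
    using y_lim order_tendstoD(1)[OF K_lim u]
    by (auto simp: filterlim_at_top_dense y_def v_def intro: eventually_conj)
  then have "eventually (\<lambda>k. v k * ((ln 4 + ln (v k)) * (1 / ln (y k)) + 1 - ln (ln (y k)) / ln (y k))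
      = K k * ln (4 * K k / B k) / L k) sequentially"
  proof eventually_elim
    case (elim k)
    have "0 < L k" using elim B[of k] by (simp add: y_def field_simps)
    have "0 < ln (y k)" using elim by simp
    have K: "K k = v k * L k / ln (y k)" using \<open>0 < ln (y k)\<close> \<open>0 < L k\<close> by (simp add: v_def)
    have "4 * K k / B k = 4 * v k * y k / ln (y k)" using B[of k] by (simp add: K y_def mult_ac)
    then have ln_4K: "ln (4 * K k / B k) = ln 4 + ln (v k) + ln (y k) - ln (ln (y k))"
      using elim \<open>0 < ln (y k)\<close> by (simp add: ln_mult ln_div)
    show ?case unfolding ln_4K using \<open>0 < ln (y k)\<close> \<open>0 < L k\<close> by (simp add: K field_simps)
  qed
  ultimately show ?thesis by (simp add: Lim_transform_eventually)
qed

lemma filterlim_at_top_of_le_div: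
  fixes B L :: "nat \<Rightarrow> real"
  assumes B: "\<And>k. B k \<ge> 1" and L: "\<And>k. L k > 0" and y_lim: "filterlim (\<lambda>k. L k / B k) at_top sequentially"
  shows "filterlim L at_top sequentially"
proof (rule filterlim_at_top_mono[OF y_lim])
  have "L k / B k \<le> L k" for k using B[of k] L[of k] by (simp add: pos_divide_le_eq mult_le_cancel_left1)
  then show "eventually (\<lambda>k. L k / B k \<le> L k) sequentially" by simp
qed

lemma eventually_approx_degree_le_log:
  fixes B L :: "nat \<Rightarrow> real" and u :: real
  assumes B: "\<And>k. B k \<ge> 1" and L: "\<And>k. L k > 0"
    and y_lim: "filterlim (\<lambda>k. L k / B k) at_top sequentially" and u: "u > 1"
  shows "eventually (\<lambda>k. real (approx_degree (B k) (exp (- L k)) exp) \<le> u * (L k / ln (L k / B k))) sequentially"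
proof -
  define X where "X k = L k / ln (L k / B k)" for k
  have B0: "B k > 0" for k using B[of k] by simp
  have X_lim: "filterlim X at_top sequentially"
    unfolding X_def by (rule filterlim_div_ln_div_at_top[OF B y_lim])
  define N where "N k = nat \<lceil>u * X k\<rceil>" for k
  define K where "K k = real (N k)" for k
  have u0: "u > 0" using u by simp
  note N = nat_ceiling_asymp[OF X_lim u0, folded N_def, folded K_def]
  have "((\<lambda>y::real. 1 / ln y) \<longlongrightarrow> 0) at_top" by real_asymp
  from filterlim_compose[OF this y_lim] have inv_ln: "(\<lambda>k. 1 / ln (L k / B k)) \<longlonglongrightarrow> 0" .
  define W where "W k = 9/16 * inverse (L k / B k) + K k / X k * (1 / ln (L k / B k)) + ln 2 / L k + 1
      - K k * ln (4 * K k / B k) / L k" for k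
  have "W \<longlonglongrightarrow> 9/16 * 0 + u * 0 + 0 + 1 - u"
    using u N(2) unfolding W_def X_def
    by (intro tendsto_intros tendsto_inverse_0_at_top[OF y_lim] inv_ln
        tendsto_divide_0[OF tendsto_const filterlim_at_top_imp_at_infinity[OF filterlim_at_top_of_le_div[OF B L y_lim]]]
        log_regime_ratio_tendsto[OF B0 y_lim]) auto
  then have "eventually (\<lambda>k. W k < 0) sequentially"
    by (rule order_tendstoD(2)) (use u in simp)
  moreover have "eventually (\<lambda>k. 1 < L k / B k) sequentially" using y_lim by (simp add: filterlim_at_top_dense)
  ultimately show ?thesis
    using N(1) unfolding X_def[symmetric]
  proof eventually_elim
    case (elim k)
    have "B k \<le> X k" using le_div_ln_div[OF B0 elim(2)] by (simp add: X_def)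
    moreover have "X k \<le> u * X k" using u \<open>B k \<le> X k\<close> B0[of k] by simp
    ultimately have KB: "B k \<le> K k" using elim(3) by linarith
    have "0 < ln (L k / B k)" using elim(2) by simp
    then have "L k * W k = 9/16 * B k + K k + ln 2 + L k - K k * ln (4 * K k / B k)"
      using L[of k] B0[of k] by (simp add: W_def X_def field_simps)
    moreover have "L k * W k < 0" using elim(1) L[of k] by (simp add: mult_pos_neg)
    ultimately have "9/16 * B k + K k + ln 2 + L k - K k * ln (4 * K k / B k) < 0" by linarith
    from approx_degree_less_if_log_bound[OF B0 _ KB[unfolded K_def] this[unfolded K_def]] elim(3)
    have "approx_degree (B k) (exp (- L k)) exp < N k" by simp
    then have "real (approx_degree (B k) (exp (- L k)) exp + 1) \<le> real (N k)" by (intro of_nat_mono) simp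
    then show ?case using elim(3) by (simp add: K_def)
  qed
qed

lemma eventually_approx_degree_ge_log:
  fixes B L :: "nat \<Rightarrow> real" and u :: real
  assumes B: "\<And>k. B k \<ge> 1" and L: "\<And>k. L k > 0"
    and y_lim: "filterlim (\<lambda>k. L k / B k) at_top sequentially" and u: "0 < u" "u < 1"
  shows "eventually (\<lambda>k. u * (L k / ln (L k / B k)) \<le> real (approx_degree (B k) (exp (- L k)) exp)) sequentially"
proof -
  define X where "X k = L k / ln (L k / B k)" for k
  have B0: "B k > 0" for k using B[of k] by simp
  have X_lim: "filterlim X at_top sequentially"
    unfolding X_def by (rule filterlim_div_ln_div_at_top[OF B y_lim])
  define K where "K k = nat \<lceil>u * X k\<rceil>" for k
  note K = nat_ceiling_asymp[OF X_lim u(1), folded K_def]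
  have "(\<lambda>k. real (K k) * ln (4 * real (K k) / B k) / L k + ln 2 / L k) \<longlonglongrightarrow> u + 0"
    using u K(2) unfolding X_def
    by (intro tendsto_intros log_regime_ratio_tendsto[OF B0 y_lim]
        tendsto_divide_0[OF tendsto_const filterlim_at_top_imp_at_infinity[OF filterlim_at_top_of_le_div[OF B L y_lim]]]) auto
  then have "eventually (\<lambda>k. real (K k) * ln (4 * real (K k) / B k) / L k + ln 2 / L k < 1) sequentially"
    by (rule order_tendstoD(2)) (use u in simp)
  then show ?thesis
    using K(1) unfolding X_def[symmetric]
  proof eventually_elim
    case (elim k)
    have "real (K k) * ln (4 * real (K k) / B k) + ln 2 \<le> L k"
      using elim(1) L[of k] by (simp add: field_simps)
    from approx_degree_ge_if_log_bound[OF B0 _ this] elim(2)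
    have "real (K k) \<le> real (approx_degree (B k) (exp (- L k)) exp)" by simp
    then show ?case using elim(2) by linarith
  qed
qed

lemma approx_degree_log_regime:
  fixes B L :: "nat \<Rightarrow> real"
  assumes B: "\<And>k. B k \<ge> 1" and L: "\<And>k. L k > 0"
    and y_lim: "filterlim (\<lambda>k. L k / B k) at_top sequentially"
  shows "(\<lambda>k. real (approx_degree (B k) (exp (- L k)) exp) / (L k / ln (L k / B k))) \<longlonglongrightarrow> 1"
proof (rule tendsto_divide_of_eventual_bounds[OF filterlim_div_ln_div_at_top[OF B y_lim] zero_less_one])
  fix u :: real
  assume "0 < u" "u < 1"
  then show "eventually (\<lambda>k. u * (L k / ln (L k / B k)) \<le> real (approx_degree (B k) (exp (- L k)) exp)) sequentially"
    by (rule eventually_approx_degree_ge_log[OF B L y_lim])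
next
  fix u :: real
  assume "1 < u"
  then show "eventually (\<lambda>k. real (approx_degree (B k) (exp (- L k)) exp) \<le> u * (L k / ln (L k / B k))) sequentially"
    by (rule eventually_approx_degree_le_log[OF B L y_lim])
qed

lemma filterlim_at_top_of_add_exp:
  fixes B L :: "nat \<Rightarrow> real" and c :: real
  assumes lim: "filterlim (\<lambda>k. B k + exp (L k)) at_top sequentially"
    and c: "c \<ge> 0" and L_le: "eventually (\<lambda>k. L k \<le> c * B k) sequentially"
  shows "filterlim B at_top sequentially"
  unfolding filterlim_at_top
proof
  fix Z
  show "eventually (\<lambda>k. Z \<le> B k) sequentially"
    using lim[unfolded filterlim_at_top, rule_format, of "Z + exp (c * Z)"] L_le
  proof eventually_elim
    case (elim k)
    show ?case
    proof (rule ccontr)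
      assume "\<not> Z \<le> B k"
      then have "L k \<le> c * Z" using elim(2) c mult_left_mono[of "B k" Z c] by linarith
      then have "exp (L k) \<le> exp (c * Z)" by simp
      then show False using elim(1) \<open>\<not> Z \<le> B k\<close> by linarith
    qed
  qed
qed

lemma approx_degree_proportional_regime:
  fixes B L :: "nat \<Rightarrow> real" and r \<mu> :: real
  assumes B: "\<And>k. B k \<ge> 1" and r: "r > 0" and BL: "\<And>k. B k = 2 * r * L k"
    and \<mu>: "\<mu> > 0" and G\<mu>: "G \<mu> = -1 - 1 / r"
    and lim: "filterlim (\<lambda>k. B k + exp (L k)) at_top sequentially"
  shows "(\<lambda>k. real (approx_degree (B k) (exp (- L k)) exp) / L k) \<longlonglongrightarrow> \<mu> * r"
proof -
  have B0: "B k > 0" for k using B[of k] by simp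
  have L0: "L k > 0" for k using B0[of k] r by (simp add: BL zero_less_mult_iff)
  have "L k \<le> 1 / (2 * r) * B k" for k using BL[of k] r by simp
  then have B_lim: "filterlim B at_top sequentially"
    using r by (intro filterlim_at_top_of_add_exp[OF lim, of "1 / (2 * r)"]) auto
  have "L k / (B k / 2) = 1 / r" for k using BL[of k] L0[of k] r by (simp add: field_simps)
  then have "(\<lambda>k. real (approx_degree (B k) (exp (- L k)) exp) / (B k / 2)) \<longlonglongrightarrow> \<mu>"
    using G\<mu> by (intro approx_degree_linear_regime[OF B0 B_lim _ \<mu>, of _ "1 / r"]) simp_all
  then have "(\<lambda>k. r * (real (approx_degree (B k) (exp (- L k)) exp) / (B k / 2))) \<longlonglongrightarrow> r * \<mu>"
    by (rule tendsto_mult_left)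
  moreover have "r * (real (approx_degree (B k) (exp (- L k)) exp) / (B k / 2))
      = real (approx_degree (B k) (exp (- L k)) exp) / L k" for k
    using BL[of k] L0[of k] r by (simp add: field_simps)
  ultimately show ?thesis by (simp add: mult.commute)
qed

lemma approx_degree_large_B_regime:
  fixes B L :: "nat \<Rightarrow> real" and z :: real
  assumes B: "\<And>k. B k \<ge> 1" and L: "\<And>k. L k > 0"
    and ratio: "filterlim (\<lambda>k. B k / L k) at_top sequentially"
    and z: "z > 0" and Gz: "G z = -1"
    and lim: "filterlim (\<lambda>k. B k + exp (L k)) at_top sequentially"
  shows "(\<lambda>k. real (approx_degree (B k) (exp (- L k)) exp) / (z * B k / 2)) \<longlonglongrightarrow> 1"
proof -
  have B0: "B k > 0" for k using B[of k] by simp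
  have "eventually (\<lambda>k. 1 \<le> B k / L k) sequentially"
    using ratio by (simp add: filterlim_at_top)
  then have "eventually (\<lambda>k. L k \<le> 1 * B k) sequentially"
    by eventually_elim (use L in \<open>simp add: field_simps\<close>)
  then have B_lim: "filterlim B at_top sequentially" by (rule filterlim_at_top_of_add_exp[OF lim zero_le_one])
  have "(\<lambda>k. 2 * inverse (B k / L k)) \<longlonglongrightarrow> 2 * 0"
    by (intro tendsto_intros tendsto_inverse_0_at_top ratio)
  then have "(\<lambda>k. real (approx_degree (B k) (exp (- L k)) exp) / (B k / 2)) \<longlonglongrightarrow> z"
    using Gz by (intro approx_degree_linear_regime[OF B0 B_lim _ z, of _ 0]) (simp_all add: mult.commute)
  then have "(\<lambda>k. real (approx_degree (B k) (exp (- L k)) exp) / (B k / 2) / z) \<longlonglongrightarrow> z / z"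
    using z by (intro tendsto_divide tendsto_const) simp_all
  then show ?thesis using z by (simp add: mult.commute)
qed

theorem theorem1p2:
  fixes B \<delta> :: "nat \<Rightarrow> real"
  assumes B_ge: "\<And>k. B k \<ge> 1"
    and \<delta>_pos: "\<And>k. 0 < \<delta> k" and \<delta>_lt: "\<And>k. \<delta> k < 1"
    and lim: "filterlim (\<lambda>k. B k + 1 / \<delta> k) at_top sequentially"
  defines "L \<equiv> (\<lambda>k. ln (1 / \<delta> k))"
    and "d \<equiv> (\<lambda>k. real (approx_degree (B k) (\<delta> k) exp))"
  shows
    "((\<lambda>k. B k / L k) \<longlonglongrightarrow> 0 \<longrightarrow>
        (\<lambda>k. d k / (L k / ln (L k / B k))) \<longlonglongrightarrow> 1)
     \<and> (\<forall>r \<mu>. r > 0 \<and> (\<forall>k. B k = 2 * r * L k) \<and> \<mu> > 0 \<and> G \<mu> = -1 - 1 / r \<longrightarrow>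
        (\<lambda>k. d k / L k) \<longlonglongrightarrow> \<mu> * r)
     \<and> (\<forall>z. filterlim (\<lambda>k. B k / L k) at_top sequentially \<and> z > 0 \<and> G z = -1 \<longrightarrow>
        (\<lambda>k. d k / (z * B k / 2)) \<longlonglongrightarrow> 1)"
proof -
  have L: "L k > 0" for k using \<delta>_pos[of k] \<delta>_lt[of k] by (simp add: L_def)
  have d: "d k = real (approx_degree (B k) (exp (- L k)) exp)" for k
    using \<delta>_pos[of k] by (simp add: d_def L_def ln_div)
  have lim': "filterlim (\<lambda>k. B k + exp (L k)) at_top sequentially"
    using lim \<delta>_pos by (simp add: L_def)
  have "(\<lambda>k. d k / (L k / ln (L k / B k))) \<longlonglongrightarrow> 1" if "(\<lambda>k. B k / L k) \<longlonglongrightarrow> 0"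
  proof -
    have pos: "0 < B k / L k" for k using B_ge[of k] L[of k] by simp
    have "filterlim (\<lambda>k. inverse (B k / L k)) at_top sequentially"
      by (intro filterlim_inverse_at_top[OF that] always_eventually) (simp add: pos)
    then show ?thesis unfolding d using approx_degree_log_regime[OF B_ge L] by simp
  qed
  moreover have "(\<lambda>k. d k / L k) \<longlonglongrightarrow> \<mu> * r"
    if "r > 0 \<and> (\<forall>k. B k = 2 * r * L k) \<and> \<mu> > 0 \<and> G \<mu> = -1 - 1 / r" for r \<mu>
    using that approx_degree_proportional_regime[OF B_ge _ _ _ _ lim', of r \<mu>] unfolding d by auto
  moreover have "(\<lambda>k. d k / (z * B k / 2)) \<longlonglongrightarrow> 1"
    if "filterlim (\<lambda>k. B k / L k) at_top sequentially \<and> z > 0 \<and> G z = -1" for z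
    using that approx_degree_large_B_regime[OF B_ge L _ _ _ lim'] unfolding d by auto
  ultimately show ?thesis by blast
qed

end
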